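(* Let $A$ be a real $n\times n$ matrix with strictly negative diagonal entries such that all $2\times2$ and all $3\times3$ principal minors of $A$ vanish. Then $G_A$ is the complete graph, $A$ is a bipartite matrix, and $\operatorname{rank}A=1$.
   Context: The connectivity graph $G_A$ is the simple graph on $\{1,\dots,n\}$ containing edge $(ij)$, $i\ne j$, unless $A_{ij}=A_{ji}=0$. A principal minor is the determinant of a principal submatrix $A_\sigma$ (rows and columns indexed by $\sigma$). A real $n\times n$ matrix $A$ is bipartite if $\{1,\dots,n\}$ can be partitioned into disjoint sets $\sigma,\bar\sigma$ such that: if $i\in\sigma,j\in\bar\sigma$ then $A_{ij}\ge0$ and $A_{ji}\ge0$; and if $i,j\in\sigma$ or $i,j\in\bar\sigma$ then $A_{ij}\le0$ and $A_{ji}\le0$. *)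

theory Defs
  imports "HOL-Analysis.Analysis"
begin

definition principal_minor :: "real^'n^'n \<Rightarrow> 'n set \<Rightarrow> real" where
  "principal_minor A \<sigma> =
     (\<Sum>p | p permutes \<sigma>. of_int (sign p) * (\<Prod>i\<in>\<sigma>. A $ i $ p i))"

definition conn_edge :: "real^'n^'n \<Rightarrow> 'n \<Rightarrow> 'n \<Rightarrow> bool" where
  "conn_edge A i j \<longleftrightarrow> i \<noteq> j \<and> \<not> (A $ i $ j = 0 \<and> A $ j $ i = 0)"

definition conn_graph_complete :: "real^'n^'n \<Rightarrow> bool" where
  "conn_graph_complete A \<longleftrightarrow> (\<forall>i j. i \<noteq> j \<longrightarrow> conn_edge A i j)"

definition bipartite_matrix :: "real^'n^'n \<Rightarrow> bool" where
  "bipartite_matrix A \<longleftrightarrow> (\<exists>\<sigma>::'n set.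
     (\<forall>i j. i \<in> \<sigma> \<and> j \<notin> \<sigma> \<longrightarrow> A $ i $ j \<ge> 0 \<and> A $ j $ i \<ge> 0) \<and>
     (\<forall>i j. (i \<in> \<sigma> \<longleftrightarrow> j \<in> \<sigma>) \<longrightarrow> A $ i $ j \<le> 0 \<and> A $ j $ i \<le> 0))"

end

theory Submission
  imports Defs
begin

text \<open>
  Expanding the vanishing 2x2 principal minors gives
  A_ij A_ji = A_ii A_jj for all i, j; with a negative diagonal this product is
  positive, so every entry is nonzero and the graph G_A is complete.  For distinct
  i, j, k the two cycle products x = A_ij A_jk A_ki and y = A_ik A_kj A_ji satisfy
  x + y = 2D (vanishing 3x3 minor) and x y = D^2 (pair identities), where
  D = A_ii A_jj A_kk; hence x = y = D.  Fixing an index a, these identities give the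
  rank-one identity A_ij A_aa = A_ia A_aj.  From it, (i) every row is a multiple of
  row a, so rank A = 1, and (ii) A_ij has the sign opposite to A_ia A_ja, a bipartite
  sign pattern with parts {i. A_ia < 0} and its complement.
\<close>

lemma principal_minor_2:
  fixes A :: "real^'n^'n"
  assumes "i \<noteq> j"
  shows "principal_minor A {i,j} = A$i$i * A$j$j - A$i$j * A$j$i"
proof -
  have f: "finite {j}" "i \<notin> {j}" using assms by auto
  show ?thesis
    unfolding principal_minor_def sum_over_permutations_insert[OF f] permutes_sing
    using assms by (simp add: sign_swap_id sign_id swap_id_eq)
qed

lemma principal_minor_3:
  fixes A :: "real^'n^'n"
  assumes "i \<noteq> j" "i \<noteq> k" "j \<noteq> k"
  shows "principal_minor A {i,j,k} =
    A$i$i * A$j$j * A$k$k + A$i$j * A$j$k * A$k$i + A$i$k * A$j$i * A$k$j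
    - A$i$i * A$j$k * A$k$j - A$i$j * A$j$i * A$k$k - A$i$k * A$j$j * A$k$i"
proof -
  have f1: "finite {j,k}" "i \<notin> {j,k}" using assms by auto
  have f2: "finite {k}" "j \<notin> {k}" using assms by auto
  show ?thesis
    unfolding principal_minor_def sum_over_permutations_insert[OF f1]
      sum_over_permutations_insert[OF f2] permutes_sing
    using assms by (simp add: sign_swap_id permutation_swap_id sign_compose sign_id
        swap_id_eq transpose_def algebra_simps)
qed

text \<open>Two reals with sum 2d and product d^2 both equal d (they are the double root of
  (t - d)^2).\<close>
lemma eq_of_sum_and_product:
  fixes x y d :: real
  assumes "x + y = 2 * d" and "x * y = d * d"
  shows "x = d"
proof -
  have "(x - y)^2 = (x + y)^2 - 4 * (x * y)" by (simp add: power2_eq_square algebra_simps)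
  also have "\<dots> = 0" using assms by (simp add: power2_eq_square)
  finally have "x = y" by simp
  then show ?thesis using assms(1) by simp
qed

locale zero_2_minors =
  fixes A :: "real^'n^'n"
  assumes minors2: "\<And>\<sigma>. card \<sigma> = 2 \<Longrightarrow> principal_minor A \<sigma> = 0"
begin

lemma pair_product: "A$i$j * A$j$i = A$i$i * A$j$j"
proof (cases "i = j")
  case False
  then show ?thesis using minors2[of "{i,j}"] principal_minor_2[OF False, of A] by simp
qed simp

end

locale zero_small_minors = zero_2_minors +
  assumes minors3: "\<And>\<sigma>. card \<sigma> = 3 \<Longrightarrow> principal_minor A \<sigma> = 0"
begin

lemma cycle_product:
  assumes distinct: "i \<noteq> j" "i \<noteq> k" "j \<noteq> k"
  shows "A$i$j * A$j$k * A$k$i = A$i$i * A$j$j * A$k$k"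
proof -
  define x where "x = A$i$j * A$j$k * A$k$i"
  define y where "y = A$i$k * A$j$i * A$k$j"
  define D where "D = A$i$i * A$j$j * A$k$k"
  have "card {i,j,k} = 3" using distinct by simp
  then have sum: "x + y = 2 * D"
    using minors3[of "{i,j,k}"] principal_minor_3[OF distinct, of A]
      pair_product[of i j] pair_product[of i k] pair_product[of j k]
    unfolding x_def y_def D_def by (simp add: algebra_simps)
  have "x * y = (A$i$j * A$j$i) * (A$j$k * A$k$j) * (A$i$k * A$k$i)"
    unfolding x_def y_def by (simp add: algebra_simps)
  also have "\<dots> = D * D"
    unfolding D_def pair_product by (simp add: algebra_simps)
  finally show ?thesis using eq_of_sum_and_product[OF sum] unfolding x_def D_def by simp
qed

end

locale neg_diag_zero_small_minors = zero_small_minors +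
  assumes diag: "\<And>i. A $ i $ i < 0"
begin

lemma pair_product_pos: "A$i$j * A$j$i > 0"
  using pair_product[of i j] diag[of i] diag[of j] by (simp add: mult_neg_neg)

lemma entry_nonzero: "A$i$j \<noteq> 0"
  using pair_product_pos[of i j] by auto

lemma rank_one_identity: "A$i$j * A$a$a = A$i$a * A$a$j"
proof -
  consider "i = a" | "j = a" | "i = j" "i \<noteq> a" | "i \<noteq> j" "i \<noteq> a" "j \<noteq> a" by blast
  then show ?thesis
  proof cases
    case 3
    then show ?thesis using pair_product[of i a] by (simp add: algebra_simps)
  next
    case 4
    have "(A$i$j * A$a$a) * (A$j$a * A$a$i) = (A$i$j * A$j$a * A$a$i) * A$a$a"
      by (simp add: algebra_simps)
    also have "\<dots> = (A$i$i * A$a$a) * (A$j$j * A$a$a)"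
      using cycle_product[OF 4] by (simp add: algebra_simps)
    also have "\<dots> = (A$i$a * A$a$i) * (A$a$j * A$j$a)"
      unfolding pair_product[of i a] pair_product[of a j] by (simp add: algebra_simps)
    finally have "(A$i$j * A$a$a) * (A$j$a * A$a$i) = (A$i$a * A$a$j) * (A$j$a * A$a$i)"
      by (simp add: algebra_simps)
    moreover have "A$j$a * A$a$i \<noteq> 0" using entry_nonzero by simp
    ultimately show ?thesis by simp
  qed (simp_all add: mult.commute)
qed

lemma sign_pattern: "A$i$j * (A$i$a * A$j$a) < 0"
proof -
  have "(A$i$j * (A$i$a * A$j$a)) * A$a$a = (A$i$a)^2 * (A$a$j * A$j$a)"
    using rank_one_identity[of i j a] by (simp add: power2_eq_square algebra_simps)
  also have "\<dots> > 0"
    using pair_product_pos[of a j] entry_nonzero[of i a] by (simp add: mult_pos_pos)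
  finally show ?thesis using diag[of a] by (auto simp: zero_less_mult_iff)
qed

end

lemma bipartite_if_sign_pattern:
  fixes A :: "real^'n^'n" and u :: "'n \<Rightarrow> real"
  assumes sign: "\<And>i j. A$i$j * (u i * u j) < 0"
  shows "bipartite_matrix A"
  unfolding bipartite_matrix_def
proof (intro exI[of _ "{i. u i < 0}"] conjI allI impI)
  have nonzero: "u i \<noteq> 0" for i using sign[of i i] by auto
  have both: "A$i$j * (u i * u j) < 0 \<and> A$j$i * (u i * u j) < 0" for i j
    using sign[of i j] sign[of j i] by (simp add: mult.commute)
  {
    fix i j
    assume "i \<in> {i. u i < 0} \<and> j \<notin> {i. u i < 0}"
    then have p: "u i * u j < 0" using nonzero[of j] by (simp add: mult_neg_pos)
    show "A$i$j \<ge> 0" "A$j$i \<ge> 0"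
      using both[of i j] p mult_neg_neg not_le less_asym by metis+
  next
    fix i j
    assume "(i \<in> {i. u i < 0}) = (j \<in> {i. u i < 0})"
    then have p: "u i * u j > 0" using nonzero[of i] nonzero[of j] by (auto simp: zero_less_mult_iff)
    show "A$i$j \<le> 0" "A$j$i \<le> 0"
      using both[of i j] p mult_pos_pos not_le less_asym by metis+
  }
qed

lemma rank_one_if_rows_proportional:
  fixes A :: "real^'n^'m"
  assumes rows: "\<And>i. row i A = c i *\<^sub>R row a A" and nonzero: "row a A \<noteq> 0"
  shows "rank A = 1"
proof -
  have "rows A \<subseteq> span {row a A}"
  proof
    fix r assume "r \<in> rows A"
    then obtain i where r: "r = row i A" unfolding rows_def by blast
    show "r \<in> span {row a A}" unfolding r rows[of i] by (intro span_mul span_base) simp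
  qed
  moreover have "{row a A} \<subseteq> span (rows A)"
    unfolding rows_def by (auto intro: span_base)
  ultimately have "span (rows A) = span {row a A}" using span_eq by blast
  then have "dim (rows A) = dim {row a A}" by (metis dim_span)
  then show ?thesis using nonzero by (simp add: row_rank_def)
qed

theorem mainTheorem10:
  fixes A :: "real^'n^'n"
  assumes diag: "\<And>i. A $ i $ i < 0"
    and minors2: "\<And>\<sigma>. card \<sigma> = 2 \<Longrightarrow> principal_minor A \<sigma> = 0"
    and minors3: "\<And>\<sigma>. card \<sigma> = 3 \<Longrightarrow> principal_minor A \<sigma> = 0"
  shows "conn_graph_complete A \<and> bipartite_matrix A \<and> rank A = 1"
proof -
  interpret neg_diag_zero_small_minors A
    using assms by unfold_locales auto
  \<comment> \<open>any index can serve as the reference index of the rank-one identity\<close>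
  obtain a :: 'n where True by simp
  have "conn_graph_complete A"
    unfolding conn_graph_complete_def conn_edge_def using entry_nonzero by simp
  moreover have "bipartite_matrix A"
    using sign_pattern[of _ _ a] by (rule bipartite_if_sign_pattern)
  moreover have "rank A = 1"
  proof (rule rank_one_if_rows_proportional)
    show "row i A = (A$i$a / A$a$a) *\<^sub>R row a A" for i
      using rank_one_identity[of i _ a] diag[of a] by (simp add: vec_eq_iff row_def field_simps)
    show "row a A \<noteq> 0"
      using entry_nonzero[of a a] by (auto simp: vec_eq_iff row_def)
  qed
  ultimately show ?thesis by blast
qed

end
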